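(* Let $E$ be a Banach space containing no isomorphic copy of $c_0$, and let $(T(t))_{t\in\mathbb{R}}$ be a bounded $C_0$-group on $E$. If $x\in E$ and $a>0$ are such that $(T(a)-\mathrm{Id})x$ is asymptotically almost periodic, then $x$ is asymptotically almost periodic.
   Context: A vector $y\in E$ is asymptotically almost periodic if its orbit $\{T(t)y:t\ge0\}$ is relatively compact in $E$. A bounded $C_0$-group is a strongly continuous group homomorphism $T:\mathbb{R}\to\mathcal{L}(E)$ with $\sup_{t\in\mathbb{R}}\|T(t)\|<\infty$. *)

theory Defs
  imports "HOL-Analysis.Analysis"
begin

text \<open>The Banach space c_0 of real null sequences with the sup norm is represented by
  the set of sequences f with f tending to 0.  A space E contains an isomorphic copy of c_0
  iff there is a linear map J from c_0 to E which is bounded and bounded below.\<close>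

definition c0_embeds :: "'a::real_normed_vector itself \<Rightarrow> bool" where
  "c0_embeds _ \<longleftrightarrow>
     (\<exists>J :: (nat \<Rightarrow> real) \<Rightarrow> 'a.
        (\<forall>f g. f \<longlonglongrightarrow> 0 \<longrightarrow> g \<longlonglongrightarrow> 0 \<longrightarrow> J (\<lambda>n. f n + g n) = J f + J g) \<and>
        (\<forall>c f. f \<longlonglongrightarrow> 0 \<longrightarrow> J (\<lambda>n. c * f n) = c *\<^sub>R J f) \<and>
        (\<exists>m M. 0 < m \<and> (\<forall>f. f \<longlonglongrightarrow> 0 \<longrightarrow>
            m * (SUP n. \<bar>f n\<bar>) \<le> norm (J f) \<and> norm (J f) \<le> M * (SUP n. \<bar>f n\<bar>))))"

definition bounded_C0_group :: "(real \<Rightarrow> ('a::banach \<Rightarrow>\<^sub>L 'a)) \<Rightarrow> bool" where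
  "bounded_C0_group T \<longleftrightarrow>
     T 0 = id_blinfun \<and>
     (\<forall>s t. T (s + t) = T s o\<^sub>L T t) \<and>
     (\<forall>x. continuous_on UNIV (\<lambda>t. blinfun_apply (T t) x)) \<and>
     (\<exists>M. \<forall>t. norm (T t) \<le> M)"

definition asymptotically_almost_periodic ::
  "(real \<Rightarrow> ('a::real_normed_vector \<Rightarrow>\<^sub>L 'a)) \<Rightarrow> 'a \<Rightarrow> bool" where
  "asymptotically_almost_periodic T y \<longleftrightarrow>
     compact (closure {blinfun_apply (T t) y | t. t \<ge> 0})"

end

theory Submission
  imports Defs
begin

(*
  Put W n = T(n a). Every T(t) x is some T(s), 0 \<le> s \<le> a, applied to some W n x, so it suffices
  to show that the discrete orbit {W n x} is totally bounded. The increments incr n = W n x - x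
  satisfy incr (m + n) = incr m + W m (incr n), hence all of them have totally bounded orbits, like
  incr 1 = (T(a) - Id) x; so common almost periods of finitely many increments are relatively dense.

  If the orbit of x is not totally bounded, then for any finite family of increments there are
  common almost periods d, m such that W d moves incr m by a fixed amount \<epsilon> (otherwise incr p would
  be small for all p in a relatively dense set, making the orbit totally bounded). Choosing such
  d_k, m_k inductively, each an almost period of everything chosen before, the vectors
  u_k = incr (m_k) have uniformly bounded subset sums, while W (d_k) - Id detects the k-th
  coefficient of \<Sum> t_j u_j. These are the two estimates of the unit vector basis of c_0, so (u_k)
  spans a copy of c_0.
*)

section \<open>Totally bounded sets\<close>

lemma totally_bounded_obtain_ball_cover:
  fixes S :: "'a::metric_space set"
  assumes "totally_bounded S" and "0 < e"
  obtains k where "finite k" "S \<subseteq> (\<Union>c\<in>k. ball c e)"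
  using assms unfolding totally_bounded_metric ball_def by blast

lemma compact_imp_totally_bounded:
  fixes S :: "'a::metric_space set"
  shows "compact S \<Longrightarrow> totally_bounded S"
  unfolding compact_eq_totally_bounded totally_bounded_metric ball_def by blast

lemma compact_closure_if_subset_compact:
  fixes S :: "'a::metric_space set"
  shows "S \<subseteq> K \<Longrightarrow> compact K \<Longrightarrow> compact (closure S)"
  by (meson closed_closure closure_minimal compact_eq_seq_compact_metric
      compact_imp_closed seq_compact_closed_subset)

lemma compact_closure_if_totally_bounded:
  fixes S :: "'a::complete_space set"
  assumes "totally_bounded S"
  shows "compact (closure S)"
  unfolding compact_eq_totally_bounded
proof (intro conjI allI impI)
  show "complete (closure S)"
    by (simp add: complete_eq_closed)
  fix e :: real
  assume "0 < e"
  then obtain k where "finite k" and k: "S \<subseteq> (\<Union>c\<in>k. ball c (e/2))"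
    using totally_bounded_obtain_ball_cover[OF assms, of "e/2"] by auto
  then have "S \<subseteq> (\<Union>c\<in>k. cball c (e/2))"
    using ball_subset_cball by blast
  then have "closure S \<subseteq> (\<Union>c\<in>k. cball c (e/2))"
    using \<open>finite k\<close> by (intro closure_minimal) auto
  also have "\<dots> \<subseteq> (\<Union>c\<in>k. ball c e)"
    using \<open>0 < e\<close> by auto
  finally show "\<exists>k. finite k \<and> closure S \<subseteq> (\<Union>c\<in>k. ball c e)"
    using \<open>finite k\<close> by blast
qed

lemma totally_bounded_image_obtain_net:
  fixes g :: "'c \<Rightarrow> 'b::metric_space"
  assumes "totally_bounded (g ` N)" and "0 < e"
  obtains F where "finite F" "F \<subseteq> N" "\<And>n. n \<in> N \<Longrightarrow> \<exists>n'\<in>F. dist (g n) (g n') < e"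
proof -
  obtain k where "finite k" and k: "g ` N \<subseteq> (\<Union>c\<in>k. ball c (e/2))"
    using totally_bounded_obtain_ball_cover[OF assms(1), of "e/2"] assms(2) by auto
  define near where "near c = {n \<in> N. dist (g n) c < e/2}" for c
  define F where "F = (\<lambda>c. SOME n. n \<in> near c) ` {c \<in> k. near c \<noteq> {}}"
  have "finite F" "F \<subseteq> N"
    using \<open>finite k\<close> by (auto simp: F_def near_def intro: someI2_ex)
  moreover have "\<exists>n'\<in>F. dist (g n) (g n') < e" if "n \<in> N" for n
  proof -
    obtain c where c: "c \<in> k" "dist (g n) c < e/2"
      using k \<open>n \<in> N\<close> by (force simp: dist_commute)
    then have "n \<in> near c"
      using \<open>n \<in> N\<close> by (simp add: near_def)
    define n' where "n' = (SOME n. n \<in> near c)"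
    have "n' \<in> near c"
      unfolding n'_def using \<open>n \<in> near c\<close> by (rule someI)
    then have "dist (g n) (g n') < e"
      using c(2) dist_triangle_half_l[of "g n" c e "g n'"] by (simp add: near_def dist_commute)
    moreover have "n' \<in> F"
      using c \<open>n \<in> near c\<close> by (auto simp: F_def n'_def)
    ultimately show ?thesis
      by blast
  qed
  ultimately show ?thesis
    using that by blast
qed

lemma finite_family_common_net:
  fixes g :: "'i \<Rightarrow> 'c \<Rightarrow> 'b::metric_space"
  assumes "finite H" and "\<And>z. z \<in> H \<Longrightarrow> totally_bounded (range (g z))" and "0 < e"
  shows "\<exists>J. finite J \<and> (\<forall>n. \<exists>j\<in>J. \<forall>z\<in>H. dist (g z n) (g z j) < e)"
  using assms
proof (induction H arbitrary: e rule: finite_induct)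
  case empty
  show ?case
    by blast
next
  case (insert z H)
  have "0 < e/2"
    using insert.prems(2) by simp
  then obtain J where "finite J" and J: "\<forall>n. \<exists>j\<in>J. \<forall>w\<in>H. dist (g w n) (g w j) < e/2"
    using insert.IH insert.prems(1) by blast
  define N where "N j = {n. \<forall>w\<in>H. dist (g w n) (g w j) < e/2}" for j
  have "\<exists>F. finite F \<and> F \<subseteq> N j \<and> (\<forall>n\<in>N j. \<exists>n'\<in>F. dist (g z n) (g z n') < e)" for j
  proof -
    have "totally_bounded (g z ` N j)"
      using insert.prems(1) by (rule totally_bounded_subset) auto
    then show ?thesis
      using insert.prems(2) by (elim totally_bounded_image_obtain_net) blast+
  qed
  then obtain F where F: "\<And>j. finite (F j)" "\<And>j. F j \<subseteq> N j"
      "\<And>j n. n \<in> N j \<Longrightarrow> \<exists>n'\<in>F j. dist (g z n) (g z n') < e"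
    by metis
  have "\<exists>j'\<in>(\<Union>j\<in>J. F j). \<forall>w\<in>insert z H. dist (g w n) (g w j') < e" for n
  proof -
    obtain j where "j \<in> J" "n \<in> N j"
      using J unfolding N_def by blast
    then obtain n' where n': "n' \<in> F j" "dist (g z n) (g z n') < e"
      using F(3) by blast
    have "dist (g w n) (g w n') < e" if "w \<in> H" for w
    proof -
      have "n' \<in> N j"
        using F(2) n'(1) by blast
      then show ?thesis
        using \<open>n \<in> N j\<close> that dist_triangle_half_r[of "g w j" "g w n" e "g w n'"]
        unfolding N_def by (simp add: dist_commute)
    qed
    then show ?thesis
      using n' \<open>j \<in> J\<close> by blast
  qed
  then show ?case
    using \<open>finite J\<close> F(1) by blast
qed

section \<open>A criterion for embedding c_0\<close>

lemma norm_add_sum_scaleR_le_subset_sums: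
  fixes u :: "nat \<Rightarrow> 'a::real_normed_vector"
  assumes "\<And>A. A \<subseteq> {..<n} \<Longrightarrow> norm (c + (\<Sum>j\<in>A. u j)) \<le> R"
    and "\<And>j. j < n \<Longrightarrow> t j \<in> {0..1}"
  shows "norm (c + (\<Sum>j<n. t j *\<^sub>R u j)) \<le> R"
  using assms
proof (induction n arbitrary: c)
  case 0
  then show ?case
    by (metis empty_subsetI sum.empty lessThan_0)
next
  case (Suc n)
  define v where "v = c + (\<Sum>j<n. t j *\<^sub>R u j)"
  have t: "0 \<le> t n" "t n \<le> 1"
    using Suc.prems(2)[of n] by auto
  have "norm v \<le> R"
    unfolding v_def using Suc.prems by (intro Suc.IH) (auto intro!: Suc.prems(1))
  moreover have "norm (v + u n) \<le> R"
  proof -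
    have "norm ((c + u n) + (\<Sum>j\<in>A. u j)) \<le> R" if "A \<subseteq> {..<n}" for A
    proof -
      have "n \<notin> A" "finite A"
        using that finite_subset by auto
      then have eq: "(c + u n) + (\<Sum>j\<in>A. u j) = c + (\<Sum>j\<in>insert n A. u j)"
        by (simp add: algebra_simps)
      show ?thesis
        unfolding eq using that by (intro Suc.prems(1)) auto
    qed
    then have "norm ((c + u n) + (\<Sum>j<n. t j *\<^sub>R u j)) \<le> R"
      using Suc.prems(2) by (intro Suc.IH) auto
    then show ?thesis
      unfolding v_def by (simp add: algebra_simps)
  qed
  moreover have "c + (\<Sum>j<Suc n. t j *\<^sub>R u j) = (1 - t n) *\<^sub>R v + t n *\<^sub>R (v + u n)"
    unfolding v_def by (simp add: algebra_simps)
  ultimately show ?case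
    using t convex_bound_le[of "norm v" R "norm (v + u n)" "1 - t n" "t n"]
      norm_triangle_ineq[of "(1 - t n) *\<^sub>R v" "t n *\<^sub>R (v + u n)"] by simp
qed

lemma norm_sum_scaleR_le_subset_sums:
  fixes u :: "nat \<Rightarrow> 'a::real_normed_vector"
  assumes sums: "\<And>A. A \<subseteq> {..<n} \<Longrightarrow> norm (\<Sum>j\<in>A. u j) \<le> R"
    and t: "\<And>j. j < n \<Longrightarrow> \<bar>t j\<bar> \<le> b" and "0 \<le> b"
  shows "norm (\<Sum>j<n. t j *\<^sub>R u j) \<le> 2 * R * b"
proof (cases "b = 0")
  case True
  then show ?thesis
    using t by simp
next
  case False
  then have "0 < b"
    using \<open>0 \<le> b\<close> by simp
  define pos where "pos j = max (t j / b) 0" for j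
  define neg where "neg j = max (- t j / b) 0" for j
  have "pos j \<in> {0..1}" "neg j \<in> {0..1}" if "j < n" for j
  proof -
    have "t j / b \<le> 1" "- t j / b \<le> 1"
      using t[OF that] \<open>0 < b\<close> by (metis abs_le_iff divide_le_eq_1_pos)+
    then show "pos j \<in> {0..1}" "neg j \<in> {0..1}"
      unfolding pos_def neg_def by auto
  qed
  then have "norm (0 + (\<Sum>j<n. pos j *\<^sub>R u j)) \<le> R" "norm (0 + (\<Sum>j<n. neg j *\<^sub>R u j)) \<le> R"
    using sums by (metis add_0 norm_add_sum_scaleR_le_subset_sums)+
  moreover have "(\<Sum>j<n. t j *\<^sub>R u j) = b *\<^sub>R ((\<Sum>j<n. pos j *\<^sub>R u j) - (\<Sum>j<n. neg j *\<^sub>R u j))"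
  proof -
    have "t j = b * (pos j - neg j)" for j
      using \<open>0 < b\<close> by (auto simp: pos_def neg_def max_def)
    then have "t j *\<^sub>R u j = b *\<^sub>R (pos j *\<^sub>R u j - neg j *\<^sub>R u j)" for j
      by (metis scaleR_diff_left scaleR_diff_right scaleR_scaleR)
    then have "(\<Sum>j<n. t j *\<^sub>R u j) = (\<Sum>j<n. b *\<^sub>R (pos j *\<^sub>R u j - neg j *\<^sub>R u j))"
      by simp
    then show ?thesis
      by (simp add: sum_subtractf flip: scaleR_sum_right)
  qed
  ultimately show ?thesis
    using \<open>0 < b\<close> norm_triangle_ineq4[of "\<Sum>j<n. pos j *\<^sub>R u j" "\<Sum>j<n. neg j *\<^sub>R u j"]
    by (simp add: mult_left_mono)
qed

lemma sum_divide_power2_le: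
  fixes c :: real
  assumes "0 \<le> c" and "A \<subseteq> {..<n}"
  shows "(\<Sum>j\<in>A. c / 2 ^ j) \<le> 2 * c"
proof -
  have geometric: "(\<Sum>j<n. (1 / 2 :: real) ^ j) = 2 - 2 * (1 / 2) ^ n"
    by (induction n) (simp_all add: algebra_simps)
  have "(\<Sum>j\<in>A. c / 2 ^ j) \<le> (\<Sum>j<n. c / 2 ^ j)"
    using assms by (intro sum_mono2) auto
  also have "\<dots> = c * (\<Sum>j<n. (1 / 2) ^ j)"
    by (simp add: sum_distrib_left power_one_over)
  also have "\<dots> = c * (2 - 2 * (1 / 2) ^ n)"
    by (simp only: geometric)
  also have "\<dots> \<le> 2 * c"
    using \<open>0 \<le> c\<close> by (simp add: mult_left_le algebra_simps)
  finally show ?thesis .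
qed

lemma summable_scaleR_if_c0_upper_estimate:
  fixes u :: "nat \<Rightarrow> 'a::banach"
  assumes upper: "\<And>t n b. (\<And>j. j < n \<Longrightarrow> \<bar>t j\<bar> \<le> b) \<Longrightarrow> 0 \<le> b \<Longrightarrow>
      norm (\<Sum>j<n. t j *\<^sub>R u j) \<le> C * b"
    and f: "f \<longlonglongrightarrow> 0"
  shows "summable (\<lambda>j. f j *\<^sub>R u j)"
  unfolding summable_Cauchy
proof (intro allI impI)
  fix e :: real
  assume "0 < e"
  have "0 \<le> C"
    using upper[of 0 _ 1] by simp
  define r where "r = e / (C + 1)"
  have "0 < r" and "C * r < e"
    using \<open>0 < e\<close> \<open>0 \<le> C\<close> by (auto simp: r_def field_simps)
  then obtain N where N: "\<And>j. N \<le> j \<Longrightarrow> \<bar>f j\<bar> < r"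
    using LIMSEQ_D[OF f] by fastforce
  have "norm (\<Sum>j\<in>{m..<n}. f j *\<^sub>R u j) < e" if "N \<le> m" for m n
  proof -
    have "(\<Sum>j\<in>{m..<n}. f j *\<^sub>R u j) = (\<Sum>j<n. (if m \<le> j then f j else 0) *\<^sub>R u j)"
      by (rule sum.mono_neutral_cong_left) auto
    also have "norm \<dots> \<le> C * r"
      using N that \<open>0 < r\<close> by (intro upper) (auto intro: less_imp_le)
    finally show ?thesis
      using \<open>C * r < e\<close> by linarith
  qed
  then show "\<exists>N. \<forall>m\<ge>N. \<forall>n. norm (\<Sum>j\<in>{m..<n}. f j *\<^sub>R u j) < e"
    by blast
qed

lemma c0_lower_estimate_any_index:
  fixes u :: "nat \<Rightarrow> 'a::real_normed_vector"
  assumes lower: "\<And>t n k. k < n \<Longrightarrow> (\<And>j. j < n \<Longrightarrow> \<bar>t j\<bar> \<le> \<bar>t k\<bar>) \<Longrightarrow>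
      c * \<bar>t k\<bar> \<le> norm (\<Sum>j<n. t j *\<^sub>R u j)"
    and "0 \<le> c" and "k < n"
  shows "c * \<bar>t k\<bar> \<le> norm (\<Sum>j<n. t j *\<^sub>R u j)"
proof -
  have "Max ((\<lambda>j. \<bar>t j\<bar>) ` {..<n}) \<in> (\<lambda>j. \<bar>t j\<bar>) ` {..<n}"
    using \<open>k < n\<close> by (intro Max_in) auto
  then obtain i where "i < n" "\<bar>t i\<bar> = Max ((\<lambda>j. \<bar>t j\<bar>) ` {..<n})"
    by auto
  then have t_max: "\<bar>t j\<bar> \<le> \<bar>t i\<bar>" if "j < n" for j
    using that by simp
  then have "c * \<bar>t i\<bar> \<le> norm (\<Sum>j<n. t j *\<^sub>R u j)"
    by (rule lower[OF \<open>i < n\<close>])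
  moreover have "c * \<bar>t k\<bar> \<le> c * \<bar>t i\<bar>"
    using t_max \<open>k < n\<close> \<open>0 \<le> c\<close> by (simp add: mult_left_mono)
  ultimately show ?thesis
    by linarith
qed

lemma c0_embeds_if_c0_estimates:
  fixes u :: "nat \<Rightarrow> 'a::banach"
  assumes upper: "\<And>t n b. (\<And>j. j < n \<Longrightarrow> \<bar>t j\<bar> \<le> b) \<Longrightarrow> 0 \<le> b \<Longrightarrow>
      norm (\<Sum>j<n. t j *\<^sub>R u j) \<le> C * b"
    and lower: "\<And>t n k. k < n \<Longrightarrow> (\<And>j. j < n \<Longrightarrow> \<bar>t j\<bar> \<le> \<bar>t k\<bar>) \<Longrightarrow>
      c * \<bar>t k\<bar> \<le> norm (\<Sum>j<n. t j *\<^sub>R u j)"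
    and "0 < c"
  shows "c0_embeds TYPE('a)"
proof -
  have summable: "summable (\<lambda>j. f j *\<^sub>R u j)" if "f \<longlonglongrightarrow> 0" for f
    by (rule summable_scaleR_if_c0_upper_estimate[OF _ that]) (fact upper)
  define J where "J f = (\<Sum>j. f j *\<^sub>R u j)" for f
  have partial_sums: "(\<lambda>n. \<Sum>j<n. f j *\<^sub>R u j) \<longlonglongrightarrow> J f" if "f \<longlonglongrightarrow> 0" for f
    unfolding J_def using summable_LIMSEQ[OF summable[OF that]] .
  have "J (\<lambda>n. f n + g n) = J f + J g" if "f \<longlonglongrightarrow> 0" "g \<longlonglongrightarrow> 0" for f g
    using suminf_add[OF summable[OF that(1)] summable[OF that(2)]]
    by (simp add: J_def scaleR_add_left)
  moreover have "J (\<lambda>n. r * f n) = r *\<^sub>R J f" if "f \<longlonglongrightarrow> 0" for r f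
    using suminf_scaleR_right[OF summable[OF that], of r] by (simp add: J_def)
  moreover have "c * (SUP n. \<bar>f n\<bar>) \<le> norm (J f) \<and> norm (J f) \<le> C * (SUP n. \<bar>f n\<bar>)"
    if "f \<longlonglongrightarrow> 0" for f
  proof -
    have "bdd_above (range (\<lambda>n. \<bar>f n\<bar>))"
      using convergent_imp_Bseq[OF convergentI[OF that]] by (auto simp: Bseq_def bdd_above_def)
    then have sup: "\<bar>f j\<bar> \<le> (SUP n. \<bar>f n\<bar>)" for j
      by (rule cSUP_upper[OF UNIV_I])
    have norm_J: "(\<lambda>n. norm (\<Sum>j<n. f j *\<^sub>R u j)) \<longlonglongrightarrow> norm (J f)"
      by (rule tendsto_norm[OF partial_sums[OF that]])
    have "norm (J f) \<le> C * (SUP n. \<bar>f n\<bar>)"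
      using sup by (intro LIMSEQ_le_const2[OF norm_J] exI[of _ 0] allI impI upper)
        (auto intro: order_trans[OF abs_ge_zero])
    moreover have "c * \<bar>f k\<bar> \<le> norm (J f)" for k
      using c0_lower_estimate_any_index[OF lower] \<open>0 < c\<close>
      by (intro LIMSEQ_le_const[OF norm_J] exI[of _ "Suc k"] allI impI) auto
    then have "(SUP n. \<bar>f n\<bar>) \<le> norm (J f) / c"
      using \<open>0 < c\<close> by (intro cSUP_least) (auto simp: pos_le_divide_eq mult.commute)
    ultimately show ?thesis
      using \<open>0 < c\<close> by (simp add: pos_le_divide_eq mult.commute)
  qed
  ultimately show ?thesis
    unfolding c0_embeds_def using \<open>0 < c\<close> by blast
qed

section \<open>Almost periods of a bounded discrete group\<close>

locale bounded_discrete_group =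
  fixes W :: "nat \<Rightarrow> 'a::banach \<Rightarrow> 'a" and M :: real
  assumes linear_W: "linear (W n)"
    and W_0: "W 0 z = z"
    and W_add: "W (m + n) z = W m (W n z)"
    and norm_W_le: "norm (W n z) \<le> M * norm z"
    and norm_le_W: "norm z \<le> M * norm (W n z)"
    and one_le_M: "1 \<le> M"
begin

lemma W_diff: "W n (u - v) = W n u - W n v"
  by (rule linear_diff[OF linear_W])

lemma W_plus: "W n (u + v) = W n u + W n v"
  by (rule linear_add[OF linear_W])

lemma W_scaleR: "W n (c *\<^sub>R u) = c *\<^sub>R W n u"
  by (rule linear_scale[OF linear_W])

lemma W_sum: "W n (\<Sum>i\<in>A. f i) = (\<Sum>i\<in>A. W n (f i))"
  by (rule linear_sum[OF linear_W])

lemma W_zero [simp]: "W n 0 = 0"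
  by (rule linear_0[OF linear_W])

lemma norm_W_sub_le: "norm (W n v - v) \<le> (M + 1) * norm v"
  using norm_triangle_ineq4[of "W n v" v] norm_W_le[of n v] by (simp add: algebra_simps)

definition almost_periods :: "'a set \<Rightarrow> real \<Rightarrow> nat set" where
  "almost_periods H \<delta> = {p. \<forall>z\<in>H. norm (W p z - z) \<le> \<delta>}"

lemma almost_periods_mono: "\<delta> \<le> \<delta>' \<Longrightarrow> almost_periods H \<delta> \<subseteq> almost_periods H \<delta>'"
  unfolding almost_periods_def by force

lemma almost_periods_relatively_dense:
  assumes "finite H" and "\<And>z. z \<in> H \<Longrightarrow> totally_bounded (range (\<lambda>n. W n z))" and "0 < \<delta>"
  obtains L where "\<And>n. \<exists>p\<in>almost_periods H \<delta>. p \<le> n \<and> n \<le> p + L"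
proof -
  have "0 < \<delta> / M"
    using \<open>0 < \<delta>\<close> one_le_M by simp
  then obtain J where "finite J" and J: "\<forall>n. \<exists>j\<in>J. \<forall>z\<in>H. dist (W n z) (W j z) < \<delta> / M"
    using finite_family_common_net[of H "\<lambda>z n. W n z"] assms(1,2) by blast
  have "\<exists>p\<in>almost_periods H \<delta>. p \<le> n \<and> n \<le> p + Max (insert 0 J)" for n
  proof -
    obtain j where "j \<in> J" and j: "\<forall>z\<in>H. dist (W n z) (W j z) < \<delta> / M"
      using J by blast
    then have "j \<le> Max (insert 0 J)"
      using \<open>finite J\<close> by simp
    show ?thesis
    proof (cases "j \<le> n")
      case True
      have "norm (W (n - j) z - z) \<le> \<delta>" if "z \<in> H" for z
      proof -
        have "W j (W (n - j) z - z) = W n z - W j z"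
          using True by (simp add: W_diff flip: W_add)
        then have "norm (W (n - j) z - z) \<le> M * norm (W n z - W j z)"
          using norm_le_W by metis
        also have "\<dots> \<le> M * (\<delta> / M)"
          using j that one_le_M by (intro mult_left_mono) (auto simp: dist_norm)
        finally show ?thesis
          using one_le_M by simp
      qed
      then show ?thesis
        using True \<open>j \<le> Max (insert 0 J)\<close> unfolding almost_periods_def
        by (intro bexI[of _ "n - j"]) auto
    next
      case False
      then show ?thesis
        using \<open>0 < \<delta>\<close> \<open>j \<le> Max (insert 0 J)\<close> unfolding almost_periods_def
        by (intro bexI[of _ 0]) (auto simp: W_0)
    qed
  qed
  then show ?thesis
    using that by blast
qed

lemma almost_periods_mult:
  assumes "p \<in> almost_periods H \<delta>"
  shows "k * p \<in> almost_periods H (real k * M * \<delta>)"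
  unfolding almost_periods_def
proof (intro CollectI ballI)
  fix z
  assume "z \<in> H"
  then have "norm (W p z - z) \<le> \<delta>"
    using assms by (simp add: almost_periods_def)
  show "norm (W (k * p) z - z) \<le> real k * M * \<delta>"
  proof (induction k)
    case 0
    then show ?case
      by (simp add: W_0)
  next
    case (Suc k)
    have "W (Suc k * p) z - z = W (k * p) (W p z - z) + (W (k * p) z - z)"
      by (simp add: W_diff add.commute flip: W_add)
    also have "norm \<dots> \<le> M * norm (W p z - z) + real k * M * \<delta>"
      using Suc norm_W_le by (intro norm_triangle_le add_mono) auto
    also have "\<dots> \<le> M * \<delta> + real k * M * \<delta>"
      using \<open>norm (W p z - z) \<le> \<delta>\<close> one_le_M by simp
    finally show ?case
      by (simp add: algebra_simps)
  qed
qed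

end

locale bounded_discrete_group_orbit =
  bounded_discrete_group W M for W :: "nat \<Rightarrow> 'a::banach \<Rightarrow> 'a" and M +
  fixes x :: 'a
  assumes totally_bounded_orbit_diff: "totally_bounded (range (\<lambda>n. W n (W 1 x - x)))"
begin

definition incr :: "nat \<Rightarrow> 'a" where
  "incr n = W n x - x"

lemma incr_0 [simp]: "incr 0 = 0"
  by (simp add: incr_def W_0)

lemma incr_add: "incr (m + n) = incr m + W m (incr n)"
  by (simp add: incr_def W_add W_diff)

lemma norm_incr_le: "norm (incr n) \<le> (M + 1) * norm x"
  using norm_triangle_ineq4[of "W n x" x] norm_W_le[of n x] by (simp add: incr_def algebra_simps)

lemma totally_bounded_orbit_incr: "totally_bounded (range (\<lambda>j. W j (incr r)))"
proof (induction r)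
  case 0
  show ?case
    using compact_imp_totally_bounded[OF compact_sing[of 0]] by simp
next
  case (Suc r)
  let ?K = "{u + v |u v. u \<in> closure (range (\<lambda>j. W j (incr r))) \<and>
    v \<in> closure (range (\<lambda>j. W j (incr 1)))}"
  have "compact ?K"
    using Suc totally_bounded_orbit_diff
    by (intro compact_sums compact_closure_if_totally_bounded) (simp_all add: incr_def)
  moreover have "range (\<lambda>j. W j (incr (Suc r))) \<subseteq> ?K"
  proof (intro image_subsetI)
    fix j
    have "W j (incr (Suc r)) = W j (incr r) + W (j + r) (incr 1)"
      using incr_add[of r 1] by (simp add: W_plus W_add)
    moreover have "W j (incr r) \<in> closure (range (\<lambda>j. W j (incr r)))"
      "W (j + r) (incr 1) \<in> closure (range (\<lambda>j. W j (incr 1)))"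
      by (simp_all add: closure_def)
    ultimately show "W j (incr (Suc r)) \<in> ?K"
      by blast
  qed
  ultimately show ?case
    by (intro totally_bounded_subset[OF compact_imp_totally_bounded])
qed

(* Almost invariance makes incr (k * p) grow like k *\<^sub>R incr p, while all increments are bounded. *)
lemma norm_incr_le_if_almost_invariant:
  assumes small: "\<And>d m. d \<in> almost_periods H \<delta> \<Longrightarrow> m \<in> almost_periods H \<delta> \<Longrightarrow>
      norm (W d (incr m) - incr m) \<le> \<epsilon>"
    and "0 \<le> \<delta>" and "0 < K" and K: "(M + 1) * norm x \<le> real K * \<epsilon>"
    and p: "p \<in> almost_periods H (\<delta> / (real K * M))"
  shows "norm (incr p) \<le> 2 * \<epsilon>"
proof -
  have multiple: "k * p \<in> almost_periods H \<delta>" if "k \<le> K" for k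
  proof -
    have "real k * M * (\<delta> / (real K * M)) \<le> \<delta>"
      using that \<open>0 < K\<close> \<open>0 \<le> \<delta>\<close> one_le_M by (simp add: field_simps mult_left_mono)
    then show ?thesis
      using almost_periods_mult[OF p, of k] almost_periods_mono by blast
  qed
  have linear_growth: "norm (incr (k * p) - real k *\<^sub>R incr p) \<le> real k * \<epsilon>" if "k \<le> K" for k
    using that
  proof (induction k)
    case 0
    then show ?case
      by simp
  next
    case (Suc k)
    have "incr (Suc k * p) - real (Suc k) *\<^sub>R incr p
        = (incr (k * p) - real k *\<^sub>R incr p) + (W p (incr (k * p)) - incr (k * p))"
      using incr_add[of p "k * p"] by (simp add: algebra_simps)
    also have "norm \<dots> \<le> real k * \<epsilon> + \<epsilon>"
      using Suc multiple[of 1] multiple[of k] small by (intro norm_triangle_le add_mono) auto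
    finally show ?case
      by (simp add: algebra_simps)
  qed
  have "real K * norm (incr p) \<le> norm (incr (K * p)) + norm (incr (K * p) - real K *\<^sub>R incr p)"
    using norm_triangle_ineq2[of "real K *\<^sub>R incr p" "incr (K * p)"]
    by (simp add: norm_minus_commute)
  also have "\<dots> \<le> real K * \<epsilon> + real K * \<epsilon>"
    using norm_incr_le[of "K * p"] K linear_growth[of K] by linarith
  finally show ?thesis
    using \<open>0 < K\<close> by (simp add: field_simps)
qed

lemma orbit_cover_if_small_incr_relatively_dense:
  assumes small: "\<And>n. \<exists>p. p \<le> n \<and> n \<le> p + L \<and> norm (incr p) \<le> \<epsilon>" and "0 < \<epsilon>"
  obtains k where "finite k" "range (\<lambda>n. W n x) \<subseteq> (\<Union>c\<in>k. ball c (2 * \<epsilon>))"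
proof -
  define X where "X = (+) x ` (\<Union>r\<le>L. closure (range (\<lambda>j. W j (incr r))))"
  have "compact X"
    unfolding X_def
    by (intro compact_translation compact_UN compact_closure_if_totally_bounded
        totally_bounded_orbit_incr finite_atMost)
  then obtain k where "finite k" and k: "X \<subseteq> (\<Union>c\<in>k. ball c \<epsilon>)"
    by (rule totally_bounded_obtain_ball_cover[OF compact_imp_totally_bounded \<open>0 < \<epsilon>\<close>])
  have "W n x \<in> (\<Union>c\<in>k. ball c (2 * \<epsilon>))" for n
  proof -
    obtain p where "p \<le> n" "n \<le> p + L" and "norm (incr p) \<le> \<epsilon>"
      using small by blast
    define r where "r = n - p"
    have "r \<le> L"
      using \<open>n \<le> p + L\<close> by (simp add: r_def)
    then have "x + W p (incr r) \<in> X"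
      unfolding X_def by (intro imageI UN_I[of r] subsetD[OF closure_subset]) auto
    then obtain c where "c \<in> k" and c: "dist c (x + W p (incr r)) < \<epsilon>"
      using k by auto
    have "W n x = (x + W p (incr r)) + incr p"
      using incr_add[of p r] \<open>p \<le> n\<close> by (simp add: incr_def r_def)
    then have "dist c (W n x) \<le> dist c (x + W p (incr r)) + norm (incr p)"
      using norm_triangle_ineq4[of "c - (x + W p (incr r))" "incr p"]
      by (simp add: dist_norm algebra_simps)
    then have "dist c (W n x) < 2 * \<epsilon>"
      using c \<open>norm (incr p) \<le> \<epsilon>\<close> by linarith
    then show ?thesis
      using \<open>c \<in> k\<close> by auto
  qed
  then show ?thesis
    using that \<open>finite k\<close> by blast
qed

lemma exists_almost_periods_moving_incr:
  assumes "0 < \<eta>" and not_cover: "\<And>k. finite k \<Longrightarrow> \<not> range (\<lambda>n. W n x) \<subseteq> (\<Union>c\<in>k. ball c \<eta>)"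
    and "finite H" and "H \<subseteq> range incr" and "0 < \<delta>"
  shows "\<exists>d\<in>almost_periods H \<delta>. \<exists>m\<in>almost_periods H \<delta>. \<eta> / 4 \<le> norm (W d (incr m) - incr m)"
proof (rule ccontr)
  assume "\<not> ?thesis"
  then have small: "norm (W d (incr m) - incr m) \<le> \<eta> / 4"
    if "d \<in> almost_periods H \<delta>" "m \<in> almost_periods H \<delta>" for d m
    using that by force
  define K where "K = nat \<lceil>(M + 1) * norm x / (\<eta> / 4)\<rceil> + 1"
  have "0 < K"
    by (simp add: K_def)
  have "(M + 1) * norm x / (\<eta> / 4) \<le> real K"
    using real_nat_ceiling_ge[of "(M + 1) * norm x / (\<eta> / 4)"] by (simp add: K_def)
  then have K: "(M + 1) * norm x \<le> real K * (\<eta> / 4)"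
    using \<open>0 < \<eta>\<close> by (simp add: pos_divide_le_eq)
  have "0 < \<delta> / (real K * M)"
    using \<open>0 < \<delta>\<close> \<open>0 < K\<close> one_le_M by simp
  moreover have "totally_bounded (range (\<lambda>n. W n z))" if "z \<in> H" for z
    using \<open>H \<subseteq> range incr\<close> that totally_bounded_orbit_incr by blast
  ultimately obtain L where L: "\<And>n. \<exists>p\<in>almost_periods H (\<delta> / (real K * M)). p \<le> n \<and> n \<le> p + L"
    using \<open>finite H\<close> by (elim almost_periods_relatively_dense) blast+
  have "\<exists>p. p \<le> n \<and> n \<le> p + L \<and> norm (incr p) \<le> \<eta> / 2" for n
  proof -
    obtain p where p: "p \<in> almost_periods H (\<delta> / (real K * M))" "p \<le> n" "n \<le> p + L"
      using L by blast
    have "norm (incr p) \<le> 2 * (\<eta> / 4)"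
      using \<open>0 < \<delta>\<close> by (intro norm_incr_le_if_almost_invariant[OF small _ \<open>0 < K\<close> K p(1)]) auto
    then show ?thesis
      using p by auto
  qed
  moreover have "0 < \<eta> / 2"
    using \<open>0 < \<eta>\<close> by simp
  ultimately obtain k where "finite k" "range (\<lambda>n. W n x) \<subseteq> (\<Union>c\<in>k. ball c (2 * (\<eta> / 2)))"
    by (rule orbit_cover_if_small_incr_relatively_dense)
  then show False
    using not_cover by simp
qed

section \<open>A copy of c_0 spanned by increments\<close>

lemma incr_swap: "W d (incr m) - incr m = W m (incr d) - incr d"
  by (simp add: incr_def W_diff add.commute flip: W_add)

definition test_vectors :: "(nat \<Rightarrow> nat) \<Rightarrow> (nat \<Rightarrow> nat) \<Rightarrow> nat \<Rightarrow> 'a set" where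
  "test_vectors d m k = incr ` (m ` {..<k} \<union> d ` {..<k} \<union> sum m ` Pow {..<k})"

lemma test_vectors_cong:
  assumes "\<And>i. i < k \<Longrightarrow> d' i = d i \<and> m' i = m i"
  shows "test_vectors d' m' k = test_vectors d m k"
proof -
  have "sum m' ` Pow {..<k} = sum m ` Pow {..<k}"
    using assms by (intro image_cong refl sum.cong) auto
  moreover have "m' ` {..<k} = m ` {..<k}" "d' ` {..<k} = d ` {..<k}"
    using assms by (auto intro!: image_cong)
  ultimately show ?thesis
    by (simp add: test_vectors_def)
qed

(* At step k, d k and m k are almost periods of all increments built before, including the
   subset sums of earlier m j; the tolerances \<epsilon>/8/2^k are summable. *)
definition separating_step :: "real \<Rightarrow> (nat \<Rightarrow> nat) \<Rightarrow> (nat \<Rightarrow> nat) \<Rightarrow> nat \<Rightarrow> bool" where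
  "separating_step \<epsilon> d m k \<longleftrightarrow>
     d k \<in> almost_periods (test_vectors d m k) (\<epsilon> / 8 / 2 ^ k) \<and>
     m k \<in> almost_periods (test_vectors d m k) (\<epsilon> / 8 / 2 ^ k) \<and>
     \<epsilon> \<le> norm (W (d k) (incr (m k)) - incr (m k))"

lemma obtain_separating_sequences:
  assumes "0 < \<eta>" and not_cover: "\<And>k. finite k \<Longrightarrow> \<not> range (\<lambda>n. W n x) \<subseteq> (\<Union>c\<in>k. ball c \<eta>)"
  obtains d m where "\<And>k. separating_step (\<eta> / 4) d m k"
proof -
  (* P f k r: the pair r is an admissible choice of (d k, m k) given the earlier choices f i, i < k. *)
  define P where "P f k r \<longleftrightarrow>
      separating_step (\<eta> / 4) ((fst \<circ> f)(k := fst r)) ((snd \<circ> f)(k := snd r)) k"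
    for f :: "nat \<Rightarrow> nat \<times> nat" and k r
  have test_vectors_upd: "test_vectors ((fst \<circ> f)(k := a)) ((snd \<circ> f)(k := b)) k
      = test_vectors (fst \<circ> f) (snd \<circ> f) k" for f k a b
    by (rule test_vectors_cong) simp
  have P_iff: "P f k r \<longleftrightarrow>
      fst r \<in> almost_periods (test_vectors (fst \<circ> f) (snd \<circ> f) k) (\<eta> / 4 / 8 / 2 ^ k) \<and>
      snd r \<in> almost_periods (test_vectors (fst \<circ> f) (snd \<circ> f) k) (\<eta> / 4 / 8 / 2 ^ k) \<and>
      \<eta> / 4 \<le> norm (W (fst r) (incr (snd r)) - incr (snd r))" for f k r
    unfolding P_def separating_step_def test_vectors_upd by simp
  have "\<exists>f. \<forall>k. P f k (f k)"
  proof (rule dependent_wellorder_choice)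
    show "P f k r = P g k r" if "\<And>i. i < k \<Longrightarrow> f i = g i" for r f g k
    proof -
      have "test_vectors (fst \<circ> f) (snd \<circ> f) k = test_vectors (fst \<circ> g) (snd \<circ> g) k"
        using that by (intro test_vectors_cong) simp
      then show ?thesis
        unfolding P_iff by simp
    qed
    show "\<exists>r. P f k r" for k f
    proof -
      have "finite (test_vectors (fst \<circ> f) (snd \<circ> f) k)"
        "test_vectors (fst \<circ> f) (snd \<circ> f) k \<subseteq> range incr"
        by (auto simp: test_vectors_def)
      moreover have "0 < \<eta> / 4 / 8 / 2 ^ k"
        using \<open>0 < \<eta>\<close> by simp
      ultimately obtain d' m' where
        "d' \<in> almost_periods (test_vectors (fst \<circ> f) (snd \<circ> f) k) (\<eta> / 4 / 8 / 2 ^ k)"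
        "m' \<in> almost_periods (test_vectors (fst \<circ> f) (snd \<circ> f) k) (\<eta> / 4 / 8 / 2 ^ k)"
        "\<eta> / 4 \<le> norm (W d' (incr m') - incr m')"
        using exists_almost_periods_moving_incr[OF \<open>0 < \<eta>\<close> not_cover] by blast
      then show ?thesis
        unfolding P_iff by (intro exI[of _ "(d', m')"]) simp
    qed
  qed
  then obtain f where f: "\<And>k. P f k (f k)"
    by blast
  have "(fst \<circ> f)(k := fst (f k)) = fst \<circ> f" "(snd \<circ> f)(k := snd (f k)) = snd \<circ> f" for k
    by auto
  then have "separating_step (\<eta> / 4) (fst \<circ> f) (snd \<circ> f) k" for k
    using f[of k] unfolding P_def by simp
  then show ?thesis
    by (rule that)
qed

context
  fixes \<epsilon> :: real and d m :: "nat \<Rightarrow> nat"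
  assumes "0 < \<epsilon>" and separating: "\<And>k. separating_step \<epsilon> d m k"
begin

lemma norm_move_earlier_incr:
  assumes "j < k"
  shows "norm (W (d k) (incr (m j)) - incr (m j)) \<le> \<epsilon> / 8 / 2 ^ k"
proof -
  have "incr (m j) \<in> test_vectors d m k"
    using assms by (auto simp: test_vectors_def)
  then show ?thesis
    using separating[of k] by (auto simp: separating_step_def almost_periods_def)
qed

lemma norm_move_later_incr:
  assumes "k < j"
  shows "norm (W (d k) (incr (m j)) - incr (m j)) \<le> \<epsilon> / 8 / 2 ^ j"
proof -
  have "incr (d k) \<in> test_vectors d m j"
    using assms by (auto simp: test_vectors_def)
  then show ?thesis
    using separating[of j] by (auto simp: incr_swap separating_step_def almost_periods_def)
qed

lemma norm_subset_sum_incr_sub_incr_sum: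
  "A \<subseteq> {..<n} \<Longrightarrow> norm ((\<Sum>j\<in>A. incr (m j)) - incr (sum m A)) \<le> (\<Sum>j\<in>A. \<epsilon> / 8 / 2 ^ j)"
proof (induction n arbitrary: A)
  case 0
  then show ?case
    by simp
next
  case (Suc n)
  show ?case
  proof (cases "n \<in> A")
    case False
    then show ?thesis
      using Suc by (intro Suc.IH) (auto simp: less_Suc_eq)
  next
    case True
    define B where "B = A - {n}"
    have B: "B \<subseteq> {..<n}" "A = insert n B" "n \<notin> B"
      using Suc.prems True by (auto simp: B_def less_Suc_eq)
    have "finite B"
      using B(1) by (rule finite_subset) simp
    have "incr (sum m B) \<in> test_vectors d m n"
      using B(1) by (auto simp: test_vectors_def)
    then have move: "norm (W (m n) (incr (sum m B)) - incr (sum m B)) \<le> \<epsilon> / 8 / 2 ^ n"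
      using separating[of n] by (auto simp: separating_step_def almost_periods_def)
    have "(\<Sum>j\<in>A. incr (m j)) - incr (sum m A)
        = ((\<Sum>j\<in>B. incr (m j)) - incr (sum m B)) - (W (m n) (incr (sum m B)) - incr (sum m B))"
      using B \<open>finite B\<close> incr_add[of "m n" "sum m B"] by (simp add: algebra_simps)
    also have "norm \<dots> \<le> norm ((\<Sum>j\<in>B. incr (m j)) - incr (sum m B))
        + norm (W (m n) (incr (sum m B)) - incr (sum m B))"
      by (rule norm_triangle_ineq4)
    also have "\<dots> \<le> (\<Sum>j\<in>B. \<epsilon> / 8 / 2 ^ j) + \<epsilon> / 8 / 2 ^ n"
      using Suc.IH[OF B(1)] move by (rule add_mono)
    also have "\<dots> = (\<Sum>j\<in>A. \<epsilon> / 8 / 2 ^ j)"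
      using B \<open>finite B\<close> by simp
    finally show ?thesis .
  qed
qed

lemma norm_subset_sum_incr_le:
  assumes "A \<subseteq> {..<n}"
  shows "norm (\<Sum>j\<in>A. incr (m j)) \<le> (M + 1) * norm x + \<epsilon> / 4"
proof -
  have "norm (\<Sum>j\<in>A. incr (m j)) \<le> norm (incr (sum m A)) + (\<Sum>j\<in>A. \<epsilon> / 8 / 2 ^ j)"
    using norm_subset_sum_incr_sub_incr_sum[OF assms]
      norm_triangle_sub[of "\<Sum>j\<in>A. incr (m j)" "incr (sum m A)"]
    by linarith
  moreover have "(\<Sum>j\<in>A. \<epsilon> / 8 / 2 ^ j) \<le> \<epsilon> / 4"
    using sum_divide_power2_le[of "\<epsilon> / 8" A n] assms \<open>0 < \<epsilon>\<close> by simp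
  ultimately show ?thesis
    using norm_incr_le[of "sum m A"] by linarith
qed

lemma c0_upper_estimate:
  assumes "\<And>j. j < n \<Longrightarrow> \<bar>t j\<bar> \<le> b" and "0 \<le> b"
  shows "norm (\<Sum>j<n. t j *\<^sub>R incr (m j)) \<le> 2 * ((M + 1) * norm x + \<epsilon> / 4) * b"
  using assms by (intro norm_sum_scaleR_le_subset_sums norm_subset_sum_incr_le)

lemma norm_sum_earlier_moves_le:
  assumes "k < n" and t_max: "\<And>j. j < n \<Longrightarrow> \<bar>t j\<bar> \<le> \<bar>t k\<bar>"
  shows "norm (\<Sum>j<k. t j *\<^sub>R (W (d k) (incr (m j)) - incr (m j))) \<le> \<bar>t k\<bar> * (\<epsilon> / 8)"
proof -
  have "norm (t j *\<^sub>R (W (d k) (incr (m j)) - incr (m j))) \<le> \<bar>t k\<bar> * (\<epsilon> / 8 / 2 ^ k)" if "j < k" for j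
    using that \<open>k < n\<close> mult_mono[OF t_max norm_move_earlier_incr[OF that] abs_ge_zero norm_ge_zero]
    by simp
  then have "norm (\<Sum>j<k. t j *\<^sub>R (W (d k) (incr (m j)) - incr (m j)))
      \<le> (\<Sum>j<k. \<bar>t k\<bar> * (\<epsilon> / 8 / 2 ^ k))"
    by (intro order.trans[OF norm_sum] sum_mono) simp
  also have "\<dots> = (real k / 2 ^ k) * (\<bar>t k\<bar> * (\<epsilon> / 8))"
    by simp
  also have "\<dots> \<le> 1 * (\<bar>t k\<bar> * (\<epsilon> / 8))"
    using of_nat_less_two_power[of k] \<open>0 < \<epsilon>\<close> by (intro mult_right_mono) simp_all
  finally show ?thesis
    by simp
qed

lemma norm_sum_later_moves_le:
  assumes t_max: "\<And>j. j < n \<Longrightarrow> \<bar>t j\<bar> \<le> \<bar>t k\<bar>"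
  shows "norm (\<Sum>j\<in>{k<..<n}. t j *\<^sub>R (W (d k) (incr (m j)) - incr (m j))) \<le> \<bar>t k\<bar> * (\<epsilon> / 4)"
proof -
  have "norm (t j *\<^sub>R (W (d k) (incr (m j)) - incr (m j))) \<le> \<bar>t k\<bar> * (\<epsilon> / 8 / 2 ^ j)"
    if "j \<in> {k<..<n}" for j
    using that mult_mono[OF t_max norm_move_later_incr abs_ge_zero norm_ge_zero] by simp
  then have "norm (\<Sum>j\<in>{k<..<n}. t j *\<^sub>R (W (d k) (incr (m j)) - incr (m j)))
      \<le> \<bar>t k\<bar> * (\<Sum>j\<in>{k<..<n}. \<epsilon> / 8 / 2 ^ j)"
    unfolding sum_distrib_left by (intro order.trans[OF norm_sum] sum_mono)
  also have "\<dots> \<le> \<bar>t k\<bar> * (2 * (\<epsilon> / 8))"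
    using \<open>0 < \<epsilon>\<close> by (intro mult_left_mono sum_divide_power2_le) auto
  finally show ?thesis
    by simp
qed

lemma c0_lower_estimate:
  assumes "k < n" and t_max: "\<And>j. j < n \<Longrightarrow> \<bar>t j\<bar> \<le> \<bar>t k\<bar>"
  shows "\<epsilon> / (2 * (M + 1)) * \<bar>t k\<bar> \<le> norm (\<Sum>j<n. t j *\<^sub>R incr (m j))"
proof -
  (* W (d k) - Id moves the k-th term by at least \<epsilon> |t k| and all other terms by a summable amount. *)
  define v where "v = (\<Sum>j<n. t j *\<^sub>R incr (m j))"
  define e where "e j = W (d k) (incr (m j)) - incr (m j)" for j
  have "{..<n} = insert k ({..<k} \<union> {k<..<n})"
    using assms(1) by auto
  moreover have "{..<k} \<inter> {k<..<n} = {}"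
    by auto
  ultimately have "(\<Sum>j<n. g j) = (\<Sum>j<k. g j) + g k + (\<Sum>j\<in>{k<..<n}. g j)" for g :: "nat \<Rightarrow> 'a"
    by (simp add: sum.union_disjoint algebra_simps)
  moreover have "W (d k) v - v = (\<Sum>j<n. t j *\<^sub>R e j)"
    by (simp add: v_def e_def W_sum W_scaleR sum_subtractf scaleR_diff_right)
  ultimately have eq: "t k *\<^sub>R e k
      = (W (d k) v - v - (\<Sum>j<k. t j *\<^sub>R e j)) - (\<Sum>j\<in>{k<..<n}. t j *\<^sub>R e j)"
    by (simp add: algebra_simps)
  have "\<bar>t k\<bar> * \<epsilon> \<le> norm (t k *\<^sub>R e k)"
    using separating[of k] by (simp add: separating_step_def e_def mult_left_mono)
  also have "\<dots> \<le> norm (W (d k) v - v) + norm (\<Sum>j<k. t j *\<^sub>R e j) + norm (\<Sum>j\<in>{k<..<n}. t j *\<^sub>R e j)"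
    unfolding eq
    using norm_triangle_ineq4[of "W (d k) v - v - (\<Sum>j<k. t j *\<^sub>R e j)" "\<Sum>j\<in>{k<..<n}. t j *\<^sub>R e j"]
      norm_triangle_ineq4[of "W (d k) v - v" "\<Sum>j<k. t j *\<^sub>R e j"] by linarith
  finally have lead: "\<bar>t k\<bar> * \<epsilon> \<le> norm (W (d k) v - v) + norm (\<Sum>j<k. t j *\<^sub>R e j)
      + norm (\<Sum>j\<in>{k<..<n}. t j *\<^sub>R e j)" .
  have "\<bar>t k\<bar> * (\<epsilon> / 8) = \<bar>t k\<bar> * \<epsilon> / 8" "\<bar>t k\<bar> * (\<epsilon> / 4) = \<bar>t k\<bar> * \<epsilon> / 4"
    "\<bar>t k\<bar> * (\<epsilon> / 2) = \<bar>t k\<bar> * \<epsilon> / 2"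
    by simp_all
  then have "\<bar>t k\<bar> * (\<epsilon> / 2) \<le> (M + 1) * norm v"
    using lead norm_sum_earlier_moves_le[of k n t, OF assms]
      norm_sum_later_moves_le[of n t k, OF t_max]
      norm_W_sub_le[of "d k" v] \<open>0 < \<epsilon>\<close> zero_le_mult_iff[of "\<bar>t k\<bar>" \<epsilon>]
    unfolding e_def by linarith
  then have "\<bar>t k\<bar> * (\<epsilon> / 2) / (M + 1) \<le> norm v"
    using one_le_M by (simp only: pos_divide_le_eq mult.commute)
  moreover have "\<epsilon> / (2 * (M + 1)) * \<bar>t k\<bar> = \<bar>t k\<bar> * (\<epsilon> / 2) / (M + 1)"
    by simp
  ultimately show ?thesis
    by (simp only: v_def)
qed

lemma c0_embeds_if_separating: "c0_embeds TYPE('a)"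
proof (rule c0_embeds_if_c0_estimates)
  show "0 < \<epsilon> / (2 * (M + 1))"
    using \<open>0 < \<epsilon>\<close> one_le_M by simp
qed (fact c0_upper_estimate c0_lower_estimate)+

end

theorem totally_bounded_orbit_if_no_c0:
  assumes "\<not> c0_embeds TYPE('a)"
  shows "totally_bounded (range (\<lambda>n. W n x))"
  unfolding totally_bounded_metric ball_def[symmetric]
proof (rule ccontr)
  assume "\<not> (\<forall>e>0. \<exists>k. finite k \<and> range (\<lambda>n. W n x) \<subseteq> (\<Union>c\<in>k. ball c e))"
  then obtain \<eta> where "0 < \<eta>" and "\<And>k. finite k \<Longrightarrow> \<not> range (\<lambda>n. W n x) \<subseteq> (\<Union>c\<in>k. ball c \<eta>)"
    by blast
  then obtain d m where "\<And>k. separating_step (\<eta> / 4) d m k"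
    using obtain_separating_sequences by blast
  moreover have "0 < \<eta> / 4"
    using \<open>0 < \<eta>\<close> by simp
  ultimately have "c0_embeds TYPE('a)"
    using c0_embeds_if_separating by blast
  with assms show False
    by contradiction
qed

end

section \<open>From the discrete to the continuous orbit\<close>

lemma bounded_C0_group_discretization:
  assumes "bounded_C0_group T"
  obtains M where "bounded_discrete_group (\<lambda>n. blinfun_apply (T (real n * a))) M"
proof -
  obtain M0 where M0: "\<And>t. norm (T t) \<le> M0"
    using assms unfolding bounded_C0_group_def by blast
  have T_0: "T 0 = id_blinfun" and T_add: "\<And>s t. T (s + t) = T s o\<^sub>L T t"
    using assms unfolding bounded_C0_group_def by auto
  have norm_T_le: "norm (T t z) \<le> max M0 1 * norm z" for t z
    using norm_blinfun[of "T t" z] M0[of t]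
    by (meson max.cobounded1 mult_right_mono norm_ge_zero order.trans)
  show ?thesis
  proof (intro that bounded_discrete_group.intro)
    fix m n :: nat and z
    show "linear (blinfun_apply (T (real n * a)))"
      by (rule bounded_linear.linear[OF blinfun.bounded_linear_right])
    show "T (real 0 * a) z = z"
      by (simp add: T_0)
    show "T (real (m + n) * a) z = T (real m * a) (T (real n * a) z)"
      by (simp add: T_add distrib_right)
    show "norm (T (real n * a) z) \<le> max M0 1 * norm z"
      by (rule norm_T_le)
    have "z = T (- (real n * a)) (T (real n * a) z)"
      by (simp flip: blinfun_apply_blinfun_compose T_add add: T_0)
    then show "norm z \<le> max M0 1 * norm (T (real n * a) z)"
      by (metis norm_T_le)
    show "1 \<le> max M0 1"
      by simp
  qed
qed

lemma continuous_on_bounded_C0_group_apply: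
  assumes "bounded_C0_group T"
  shows "continuous_on UNIV (\<lambda>p. blinfun_apply (T (fst p)) (snd p))"
proof -
  obtain M where M: "\<And>t. norm (T t) \<le> M"
    using assms unfolding bounded_C0_group_def by blast
  have norm_T_le: "norm (T t w) \<le> M * norm w" for t w
    using norm_blinfun[of "T t" w] M[of t] by (meson mult_right_mono norm_ge_zero order.trans)
  have strong: "continuous_on UNIV (\<lambda>t. blinfun_apply (T t) z)" for z
    using assms unfolding bounded_C0_group_def by blast
  have "((\<lambda>p. T (fst p) (snd p)) \<longlongrightarrow> T s z) (at (s, z))" for s z
  proof -
    have "((\<lambda>p. T (fst p) (snd p - z)) \<longlongrightarrow> 0) (at (s, z))"
    proof (rule Lim_null_comparison)
      show "\<forall>\<^sub>F p in at (s, z). norm (T (fst p) (snd p - z)) \<le> M * norm (snd p - z)"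
        using norm_T_le by (intro always_eventually allI)
      have "((\<lambda>p. snd p - z) \<longlongrightarrow> 0) (at (s, z))"
        using tendsto_diff[OF tendsto_snd[OF tendsto_ident_at] tendsto_const, of z "(s, z)" UNIV]
        by simp
      then show "((\<lambda>p. M * norm (snd p - z)) \<longlongrightarrow> 0) (at (s, z))"
        using tendsto_mult_right_zero tendsto_norm_zero by blast
    qed
    moreover have "((\<lambda>p. T (fst p) z) \<longlongrightarrow> T s z) (at (s, z))"
    proof -
      have "isCont (\<lambda>t. T t z) (fst (s, z))"
        using strong[of z] by (simp add: continuous_on_eq_continuous_at)
      moreover have "isCont fst (s, z)"
        by (intro continuous_intros)
      ultimately have "isCont (\<lambda>p. T (fst p) z) (s, z)"
        using isCont_o2 by blast
      then show ?thesis
        by (simp add: isCont_def)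
    qed
    ultimately have "((\<lambda>p. T (fst p) (snd p - z) + T (fst p) z) \<longlongrightarrow> 0 + T s z) (at (s, z))"
      by (rule tendsto_add)
    then show ?thesis
      by (simp add: blinfun.diff_right)
  qed
  then show ?thesis
    by (auto simp: continuous_on_def)
qed

lemma compact_closure_orbit_if_discrete_orbit:
  assumes "bounded_C0_group T" and "0 < a"
    and "totally_bounded (range (\<lambda>n. blinfun_apply (T (real n * a)) x))"
  shows "compact (closure {blinfun_apply (T t) x | t. t \<ge> 0})"
proof (rule compact_closure_if_subset_compact)
  define D where "D = closure (range (\<lambda>n. blinfun_apply (T (real n * a)) x))"
  show "compact ((\<lambda>p. blinfun_apply (T (fst p)) (snd p)) ` ({0..a} \<times> D))"
    unfolding D_def using assms
    by (intro compact_continuous_image continuous_on_subset[OF continuous_on_bounded_C0_group_apply]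
        compact_Times compact_closure_if_totally_bounded) auto
  show "{blinfun_apply (T t) x | t. t \<ge> 0} \<subseteq> (\<lambda>p. blinfun_apply (T (fst p)) (snd p)) ` ({0..a} \<times> D)"
  proof clarify
    fix t :: real
    assume "0 \<le> t"
    define n where "n = nat \<lfloor>t / a\<rfloor>"
    have "real n = of_int \<lfloor>t / a\<rfloor>"
      using \<open>0 \<le> t\<close> \<open>0 < a\<close> by (simp add: n_def)
    then have "real n * a \<le> t" "t < real n * a + a"
      using \<open>0 < a\<close> floor_divide_lower[of a t] floor_divide_upper[of a t]
      by (auto simp: distrib_right)
    moreover have "T t x = T (t - real n * a) (T (real n * a) x)"
      using assms(1) unfolding bounded_C0_group_def
      by (metis blinfun_apply_blinfun_compose diff_add_cancel)
    moreover have "T (real n * a) x \<in> D"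
      unfolding D_def by (intro subsetD[OF closure_subset]) simp
    ultimately show "T t x \<in> (\<lambda>p. blinfun_apply (T (fst p)) (snd p)) ` ({0..a} \<times> D)"
      by (intro image_eqI[of _ _ "(t - real n * a, T (real n * a) x)"]) auto
  qed
qed

theorem proposition2p9:
  fixes T :: "real \<Rightarrow> ('a::banach \<Rightarrow>\<^sub>L 'a)" and x :: 'a and a :: real
  assumes "\<not> c0_embeds TYPE('a)"
    and "bounded_C0_group T"
    and "a > 0"
    and "asymptotically_almost_periodic T (blinfun_apply (T a - id_blinfun) x)"
  shows "asymptotically_almost_periodic T x"
proof -
  define W where "W n = blinfun_apply (T (real n * a))" for n
  obtain M where "bounded_discrete_group W M"
    using bounded_C0_group_discretization[OF assms(2)] unfolding W_def by blast
  have "range (\<lambda>n. W n (W 1 x - x))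
      \<subseteq> {blinfun_apply (T t) (blinfun_apply (T a - id_blinfun) x) | t. t \<ge> 0}"
    using \<open>a > 0\<close> by (auto simp: W_def blinfun.diff_left)
  then have "totally_bounded (range (\<lambda>n. W n (W 1 x - x)))"
    using assms(4) unfolding asymptotically_almost_periodic_def
    by (meson closure_subset compact_imp_totally_bounded totally_bounded_subset)
  with \<open>bounded_discrete_group W M\<close> interpret bounded_discrete_group_orbit W M x
    by (intro bounded_discrete_group_orbit.intro bounded_discrete_group_orbit_axioms.intro)
  have "totally_bounded (range (\<lambda>n. W n x))"
    using assms(1) by (rule totally_bounded_orbit_if_no_c0)
  then show ?thesis
    unfolding asymptotically_almost_periodic_def W_def
    using compact_closure_orbit_if_discrete_orbit assms(2,3) by blast
qed

end
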